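(* Let $X$ be a marked Dynkin diagram with $d$ nodes whose generalized Cartan matrix is symmetrizable, and for $n\ge d$ let $X_n$ be the extended diagram described in the context. Then the sequence $\{\det(X_n): n\ge d\}$ is an arithmetic progression.
   Context: A marked Dynkin diagram $X$ is a Dynkin diagram with nodes numbered $1,\dots,d$, node $d$ being the distinguished node, with generalized Cartan matrix $C(X)$. For $n\ge d$, $X_n$ is the Dynkin diagram obtained by attaching a simply-laced chain of $n-d$ new nodes $d+1,d+2,\dots,n$ to node $d$; its generalized Cartan matrix $C(X_n)$ is the $n\times n$ matrix with $C(X)$ as its upper-left $d\times d$ block, diagonal entries $2$ for $i>d$, entries $C_{i,i+1}=C_{i+1,i}=-1$ for $d\le i<n$, and all other entries $0$. For a Dynkin diagram $Y$, $\det(Y)$ denotes the determinant of its generalized Cartan matrix. *)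

theory Defs
  imports "Jordan_Normal_Form.Determinant"
begin

text \<open>Nodes 1..d of the diagram correspond to matrix indices 0..d-1;
  the distinguished node d is index d-1.\<close>

definition gen_cartan :: "int mat \<Rightarrow> nat \<Rightarrow> bool" where
  "gen_cartan C d \<longleftrightarrow> C \<in> carrier_mat d d \<and>
     (\<forall>i<d. C $$ (i,i) = 2) \<and>
     (\<forall>i<d. \<forall>j<d. i \<noteq> j \<longrightarrow> C $$ (i,j) \<le> 0) \<and>
     (\<forall>i<d. \<forall>j<d. C $$ (i,j) = 0 \<longleftrightarrow> C $$ (j,i) = 0)"

text \<open>Symmetrizable (Kac): C = D B with D invertible diagonal and B symmetric,
  i.e. there are nonzero e_i (= 1/d_i) with e_i C_ij = e_j C_ji.\<close>
definition symmetrizable :: "int mat \<Rightarrow> nat \<Rightarrow> bool" where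
  "symmetrizable C d \<longleftrightarrow> (\<exists>e :: nat \<Rightarrow> real. (\<forall>i<d. e i \<noteq> 0) \<and>
     (\<forall>i<d. \<forall>j<d. e i * of_int (C $$ (i,j)) = e j * of_int (C $$ (j,i))))"

definition ext_cartan :: "int mat \<Rightarrow> nat \<Rightarrow> nat \<Rightarrow> int mat" where
  "ext_cartan C d n = mat n n (\<lambda>(i,j).
     if i < d \<and> j < d then C $$ (i,j)
     else if i = j then 2
     else if (i = j + 1 \<or> j = i + 1) \<and> d - 1 \<le> min i j then -1
     else 0)"

end

theory Submission
  imports Defs
begin

text \<open>Expanding the determinant of \<open>X_(n+2)\<close> along its last row, whose only nonzero
  entries are the \<open>2\<close> on the diagonal and the \<open>-1\<close> linking it to node \<open>n + 1\<close>, gives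
  \<open>det X_(n+2) = 2 det X_(n+1) - det X_n\<close> for \<open>n \<ge> d\<close>. So the second differences of the
  sequence vanish and it is arithmetic. Nothing about \<open>C\<close> is used.\<close>

lemma arithmetic_progression_if_second_difference_zero:
  fixes f :: "nat \<Rightarrow> 'a::comm_ring_1"
  assumes rec: "\<And>k. f (Suc (Suc k)) = 2 * f (Suc k) - f k"
  shows "f k = f 0 + of_nat k * (f 1 - f 0)"
proof -
  have step: "f (Suc k) - f k = f 1 - f 0" for k
    by (induction k) (simp_all add: rec)
  show ?thesis
  proof (induction k)
    case (Suc k)
    have "f (Suc k) = f k + (f 1 - f 0)"
      using step[of k] by (simp add: algebra_simps)
    also have "\<dots> = f 0 + (1 + of_nat k) * (f 1 - f 0)"
      by (simp add: Suc.IH algebra_simps)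
    finally show ?case
      by simp
  qed simp
qed

lemma ext_cartan_carrier: "ext_cartan C d n \<in> carrier_mat n n"
  unfolding ext_cartan_def by simp

lemma mat_delete_ext_cartan_last:
  "mat_delete (ext_cartan C d (Suc n)) n n = ext_cartan C d n"
  by (rule eq_matI) (auto simp: mat_delete_def ext_cartan_def)

lemma det_ext_cartan_minor:
  assumes "d \<le> Suc m"
  shows "det (mat_delete (ext_cartan C d (Suc (Suc m))) (Suc m) m) = - det (ext_cartan C d m)"
proof -
  let ?B = "mat_delete (ext_cartan C d (Suc (Suc m))) (Suc m) m"
  have B: "?B \<in> carrier_mat (Suc m) (Suc m)"
    by (simp add: mat_delete_def ext_cartan_def)
  have last_col: "i < Suc m \<Longrightarrow> ?B $$ (i, m) = (if i = m then -1 else 0)" for i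
    using assms by (auto simp: mat_delete_def ext_cartan_def)
  have minor: "mat_delete ?B m m = ext_cartan C d m"
    by (rule eq_matI) (auto simp: mat_delete_def ext_cartan_def)
  have "det ?B = (\<Sum>i<Suc m. ?B $$ (i, m) * cofactor ?B i m)"
    by (rule laplace_expansion_column[OF B]) simp
  also have "\<dots> = ?B $$ (m, m) * cofactor ?B m m"
    by (subst sum.mono_neutral_right[of _ "{m}"]) (auto simp: last_col)
  also have "\<dots> = - det (ext_cartan C d m)"
    by (simp add: last_col cofactor_def minor)
  finally show ?thesis .
qed

lemma det_ext_cartan_Suc_Suc:
  assumes "d \<le> Suc m"
  shows "det (ext_cartan C d (Suc (Suc m))) =
    2 * det (ext_cartan C d (Suc m)) - det (ext_cartan C d m)"
proof -
  let ?A = "ext_cartan C d (Suc (Suc m))"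
  have last_row: "j < Suc (Suc m) \<Longrightarrow>
      ?A $$ (Suc m, j) = (if j = Suc m then 2 else if j = m then -1 else 0)" for j
    using assms by (auto simp: ext_cartan_def)
  have "det ?A = (\<Sum>j<Suc (Suc m). ?A $$ (Suc m, j) * cofactor ?A (Suc m) j)"
    by (rule laplace_expansion_row[OF ext_cartan_carrier]) simp
  also have "\<dots> = (\<Sum>j\<in>{m, Suc m}. ?A $$ (Suc m, j) * cofactor ?A (Suc m) j)"
    by (rule sum.mono_neutral_right) (auto simp: last_row)
  also have "\<dots> = 2 * det (ext_cartan C d (Suc m)) - det (ext_cartan C d m)"
    using assms
    by (simp add: last_row cofactor_def mat_delete_ext_cartan_last det_ext_cartan_minor)
  finally show ?thesis .
qed

theorem lemma2p2:
  fixes C :: "int mat" and d :: nat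
  assumes "d \<ge> 1"
    and "gen_cartan C d"
    and "symmetrizable C d"
  shows "\<exists>a b :: int. \<forall>n \<ge> d. det (ext_cartan C d n) = a + b * int (n - d)"
proof -
  define D where "D k = det (ext_cartan C d (d + k))" for k
  have "D (Suc (Suc k)) = 2 * D (Suc k) - D k" for k
    using det_ext_cartan_Suc_Suc[of d "d + k" C] by (simp add: D_def)
  then have D: "D k = D 0 + int k * (D 1 - D 0)" for k
    by (rule arithmetic_progression_if_second_difference_zero)
  have "det (ext_cartan C d n) = D 0 + (D 1 - D 0) * int (n - d)" if "d \<le> n" for n
    using D[of "n - d"] that by (simp add: D_def mult.commute)
  then show ?thesis by blast
qed

end
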